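(* For $g\ge 1$ let $\phi_g$ be the number of maximum matchings of $\mathcal{F}_g\setminus\{v_1,v_2\}$, let $\varphi_g$ be the number of maximum matchings of $\mathcal{F}_g\setminus\{v_1\}$, and let $\theta_g$ be the number of maximum matchings of $\mathcal{F}_g$. Then $\phi_1=1$, $\varphi_1=2$, $\theta_1=2$, and for all $g\ge 1$, $$\phi_{g+1}=4\phi_g^2\varphi_g^2,\qquad \varphi_{g+1}=4\phi_g^2\varphi_g\theta_g+4\phi_g\varphi_g^3,\qquad \theta_{g+1}=2\phi_g^2\theta_g^2+2\varphi_g^4+12\phi_g\varphi_g^2\theta_g .$$
   Context: The graphs $\mathcal{F}_g$ with four distinguished "hub" vertices $v_1,v_2,v_3,v_4$ are defined recursively. $\mathcal{F}_1$ is the 4-cycle with edges $\{v_1,v_3\},\{v_3,v_2\},\{v_2,v_4\},\{v_4,v_1\}$ (so $v_1,v_2$ are diagonal, and $v_3,v_4$ are diagonal). For $g>1$, take four disjoint copies $\mathcal{F}_{g-1}^{(i)}$, $i=1,2,3,4$, of $\mathcal{F}_{g-1}$, with hubs $v_k^{(i)}$ corresponding to $v_k$; then identify $v_1^{(1)}$ with $v_1^{(4)}$ to form the hub $v_1$ of $\mathcal{F}_g$, identify $v_2^{(2)}$ with $v_1^{(3)}$ to form $v_2$, identify $v_2^{(1)}$ with $v_1^{(2)}$ to form $v_3$, and identify $v_2^{(3)}$ with $v_2^{(4)}$ to form $v_4$. (Equivalently, $\mathcal{F}_g$ arises from $\mathcal{F}_{g-1}$ by replacing each edge $\{u,v\}$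 by two new vertices each adjacent to both $u$ and $v$, deleting the edge $\{u,v\}$.) For a graph $G$ and vertex set $S$, $G\setminus S$ denotes the subgraph induced on the vertices not in $S$. A maximum matching is a matching of maximum cardinality. *)

theory Defs
  imports Main
begin

(* Vertices: the hubs are Hub 1, Hub 2, Hub 3, Hub 4; New u v b (b = False/True) are the two
   vertices created when the (oriented) edge (u,v) is subdivided. *)
datatype vtx = Hub nat | New vtx vtx bool

(* One orientation of each edge of F_g (g >= 1). F_1 is the 4-cycle v1-v3-v2-v4-v1;
   F_{g+1} replaces every edge {u,v} of F_g by two new vertices adjacent to both u and v. *)
primrec F_arcs :: "nat \<Rightarrow> (vtx \<times> vtx) set" where
  "F_arcs 0 = {}"
| "F_arcs (Suc g) =
     (if g = 0 then {(Hub 1, Hub 3), (Hub 3, Hub 2), (Hub 2, Hub 4), (Hub 4, Hub 1)}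
      else (\<Union>(u, v)\<in>F_arcs g. \<Union>b\<in>{False, True}. {(u, New u v b), (New u v b, v)}))"

definition F_edges :: "nat \<Rightarrow> vtx set set" where
  "F_edges g = {{u, v} | u v. (u, v) \<in> F_arcs g}"

definition del_vertices :: "'a set set \<Rightarrow> 'a set \<Rightarrow> 'a set set" where
  "del_vertices E S = {e \<in> E. e \<inter> S = {}}"

definition matching :: "'a set set \<Rightarrow> 'a set set \<Rightarrow> bool" where
  "matching E M \<longleftrightarrow> M \<subseteq> E \<and> (\<forall>e\<in>M. \<forall>e'\<in>M. e \<noteq> e' \<longrightarrow> e \<inter> e' = {})"

definition max_matching :: "'a set set \<Rightarrow> 'a set set \<Rightarrow> bool" where
  "max_matching E M \<longleftrightarrow> matching E M \<and> (\<forall>M'. matching E M' \<longrightarrow> card M' \<le> card M)"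

definition num_max_matchings :: "'a set set \<Rightarrow> nat" where
  "num_max_matchings E = card {M. max_matching E M}"

definition phi :: "nat \<Rightarrow> nat" where
  "phi g = num_max_matchings (del_vertices (F_edges g) {Hub 1, Hub 2})"

definition varphi :: "nat \<Rightarrow> nat" where
  "varphi g = num_max_matchings (del_vertices (F_edges g) {Hub 1})"

definition theta :: "nat \<Rightarrow> nat" where
  "theta g = num_max_matchings (F_edges g)"

end

theory Submission
  imports Defs
begin

(* Call a graph with a set T of hubs tight if deleting any S \<subseteq> T lowers its matching number by
   exactly |S|. Gluing two tight graphs along shared hubs H gives a tight graph, and its counts are
   determined by those of the pieces: a maximum matching of the union splits uniquely into maximum
   matchings of the two pieces, indexed by the set of shared hubs covered in the first piece, so each
   count of the union is a sum over subsets of H of products of counts of the pieces.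
   F_(g+1) consists of four copies, one for each edge of the 4-cycle v1 v3 v2 v4, of the graph that
   g subdivision steps make of a single edge, and that graph in turn is a 4-cycle of four copies of
   the one with g - 1 steps around its two end hubs. Gluing two copies in series and the two
   resulting paths in parallel gives the recursion; the base case is the 4-cycle itself. That the
   copies meet only in their hubs is read off from the names of the subdivision vertices. *)

definition tight_matchings :: "'a set set \<Rightarrow> 'a set \<Rightarrow> nat \<Rightarrow> 'a set set set" where
  "tight_matchings E S t = {M. matching (del_vertices E S) M \<and> card M + card S = t}"

definition matching_profile :: "'a set set \<Rightarrow> 'a set \<Rightarrow> nat \<Rightarrow> ('a set \<Rightarrow> nat) \<Rightarrow> bool" where
  "matching_profile E T t N \<longleftrightarrow> finite E \<and> finite T \<and> (\<forall>e\<in>E. card e = 2) \<and>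
     (\<forall>S\<subseteq>T. (\<forall>M. matching (del_vertices E S) M \<longrightarrow> card M + card S \<le> t) \<and>
        card (tight_matchings E S t) = N S \<and> 0 < N S)"

lemma matching_profile_bound:
  "matching_profile E T t N \<Longrightarrow> S \<subseteq> T \<Longrightarrow> matching (del_vertices E S) M \<Longrightarrow> card M + card S \<le> t"
  unfolding matching_profile_def by blast

lemma matching_profile_card:
  "matching_profile E T t N \<Longrightarrow> S \<subseteq> T \<Longrightarrow> card (tight_matchings E S t) = N S"
  unfolding matching_profile_def by blast

lemma matching_profile_pos: "matching_profile E T t N \<Longrightarrow> S \<subseteq> T \<Longrightarrow> 0 < N S"
  unfolding matching_profile_def by blast

lemma finite_tight_matchings: "finite E \<Longrightarrow> finite (tight_matchings E S t)"
  by (rule finite_subset[of _ "Pow E"]) (auto simp: tight_matchings_def matching_def del_vertices_def)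

lemma matching_profile_mono:
  assumes "matching_profile E T t N" "T' \<subseteq> T" "\<And>S. S \<subseteq> T' \<Longrightarrow> N' S = N S"
  shows "matching_profile E T' t N'"
  using assms finite_subset[OF assms(2)] unfolding matching_profile_def by (metis subset_trans)

lemma num_max_matchings_profile:
  assumes P: "matching_profile E T t N" and S: "S \<subseteq> T"
  shows "num_max_matchings (del_vertices E S) = N S"
proof -
  obtain M0 where M0: "M0 \<in> tight_matchings E S t"
    using matching_profile_card[OF P S] matching_profile_pos[OF P S] by fastforce
  have "max_matching (del_vertices E S) M \<longleftrightarrow> M \<in> tight_matchings E S t" for M
  proof
    assume "max_matching (del_vertices E S) M"
    then have "matching (del_vertices E S) M" "card M0 \<le> card M"
      using M0 unfolding max_matching_def tight_matchings_def by auto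
    moreover have "card M + card S \<le> t"
      using matching_profile_bound[OF P S] calculation(1) .
    ultimately show "M \<in> tight_matchings E S t"
      using M0 unfolding tight_matchings_def by simp
  next
    assume "M \<in> tight_matchings E S t"
    then show "max_matching (del_vertices E S) M"
      using matching_profile_bound[OF P S] unfolding max_matching_def tight_matchings_def by force
  qed
  then have "{M. max_matching (del_vertices E S) M} = tight_matchings E S t"
    by blast
  then show ?thesis
    using matching_profile_card[OF P S] unfolding num_max_matchings_def by simp
qed

lemma del_vertices_Un: "del_vertices (E1 \<union> E2) S = del_vertices E1 S \<union> del_vertices E2 S"
  unfolding del_vertices_def by blast

lemma matching_del_vertices_subset:
  assumes "matching (del_vertices E X) M" "\<Union>E \<subseteq> V" "S \<inter> V \<subseteq> X"
  shows "matching (del_vertices E S) M"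
  using assms unfolding matching_def del_vertices_def by blast

lemma matching_Un:
  assumes M1: "matching E1 M1" and M2: "matching E2 M2"
    and cross: "\<And>e1 e2. e1 \<in> M1 \<Longrightarrow> e2 \<in> M2 \<Longrightarrow> e1 \<inter> e2 = {}"
  shows "matching (E1 \<union> E2) (M1 \<union> M2)"
  unfolding matching_def
proof (intro conjI ballI impI)
  show "M1 \<union> M2 \<subseteq> E1 \<union> E2"
    using M1 M2 unfolding matching_def by blast
  fix e e' assume e: "e \<in> M1 \<union> M2" "e' \<in> M1 \<union> M2" "e \<noteq> e'"
  consider "e \<in> M1" "e' \<in> M1" | "e \<in> M1" "e' \<in> M2" | "e \<in> M2" "e' \<in> M1" | "e \<in> M2" "e' \<in> M2"
    using e(1,2) by blast
  then show "e \<inter> e' = {}"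
  proof cases
    case 1
    then show ?thesis using M1 e(3) unfolding matching_def by blast
  next
    case 2
    then show ?thesis using cross by blast
  next
    case 3
    then show ?thesis using cross[of e' e] by blast
  next
    case 4
    then show ?thesis using M2 e(3) unfolding matching_def by blast
  qed
qed

lemma matching_card_bound:
  assumes M: "matching E M" and two: "\<forall>e\<in>E. card e = 2" and V: "\<Union>E \<subseteq> V" "finite V"
  shows "2 * card M \<le> card V"
proof -
  have ME: "M \<subseteq> E"
    using M unfolding matching_def by blast
  have "finite e" if "e \<in> M" for e
    using that two ME by (intro card_ge_0_finite) auto
  then have "card (\<Union>M) = (\<Sum>e\<in>M. card e)"
    using M unfolding matching_def by (intro card_Union_disjoint) (auto simp: pairwise_def disjnt_def)
  also have "\<dots> = (\<Sum>e\<in>M. 2)"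
    using two ME by (intro sum.cong) auto
  also have "\<dots> = 2 * card M"
    by simp
  finally show ?thesis
    using ME V card_mono[of V "\<Union>M"] by fastforce
qed

lemma matching_star_card:
  assumes "\<forall>e\<in>E. v \<in> e" "matching E M"
  shows "card M \<le> 1"
proof (cases "finite M")
  case True
  have "e = e'" if "e \<in> M" "e' \<in> M" for e e'
    using assms that unfolding matching_def by blast
  then show ?thesis
    using True by (simp add: card_le_Suc0_iff_eq)
qed simp

lemma matchings_card_one: "{M. matching E M \<and> card M = 1} = (\<lambda>e. {e}) ` E"
  unfolding matching_def by (auto simp: card_1_singleton_iff)

locale profile_gluing =
  fixes E1 E2 :: "'a set set" and V1 V2 T1 T2 H :: "'a set"
    and t1 t2 :: nat and N1 N2 :: "'a set \<Rightarrow> nat"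
  assumes profile1: "matching_profile E1 T1 t1 N1"
    and profile2: "matching_profile E2 T2 t2 N2"
    and E1_V1: "\<Union>E1 \<subseteq> V1" and T1_V1: "T1 \<subseteq> V1"
    and E2_V2: "\<Union>E2 \<subseteq> V2" and T2_V2: "T2 \<subseteq> V2"
    and V1_Int_V2: "V1 \<inter> V2 = H" and H_T1: "H \<subseteq> T1" and H_T2: "H \<subseteq> T2"
    and E1_Int_E2: "E1 \<inter> E2 = {}"
begin

(* For A \<subseteq> H - S: the shared hubs in A are left to the first piece and deleted from the second,
   the other shared hubs outside S are deleted from the first piece. *)
definition deleted1 :: "'a set \<Rightarrow> 'a set \<Rightarrow> 'a set" where
  "deleted1 S A = S \<inter> T1 \<union> (H - S - A)"

definition deleted2 :: "'a set \<Rightarrow> 'a set \<Rightarrow> 'a set" where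
  "deleted2 S A = S \<inter> T2 \<union> A"

definition covered_in_first :: "'a set \<Rightarrow> 'a set set \<Rightarrow> 'a set" where
  "covered_in_first S M = (H - S) \<inter> \<Union>(M \<inter> E1)"

lemma finite_E1: "finite E1" and finite_E2: "finite E2"
  and finite_T1: "finite T1" and finite_T2: "finite T2" and finite_H: "finite H"
  using profile1 profile2 H_T1 finite_subset unfolding matching_profile_def by auto

lemma deleted1_subset: "deleted1 S A \<subseteq> T1"
  using H_T1 unfolding deleted1_def by blast

lemma deleted2_subset: "A \<subseteq> H - S \<Longrightarrow> deleted2 S A \<subseteq> T2"
  using H_T2 unfolding deleted2_def by blast

lemma card_deleted:
  assumes S: "S \<subseteq> T1 \<union> T2" and A: "A \<subseteq> H - S"
  shows "card (deleted1 S A) + card (deleted2 S A) = card S + card H"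
proof -
  have fin: "finite S" "finite (deleted1 S A)" "finite (deleted2 S A)"
    using finite_subset[OF S] finite_subset[OF deleted1_subset] finite_subset[OF deleted2_subset[OF A]]
      finite_T1 finite_T2 by auto
  have "deleted1 S A \<union> deleted2 S A = S \<union> H" "deleted1 S A \<inter> deleted2 S A = S \<inter> H"
    using A S H_T1 H_T2 T1_V1 T2_V2 V1_Int_V2 unfolding deleted1_def deleted2_def by blast+
  then show ?thesis
    using card_Un_Int[OF fin(2,3)] card_Un_Int[OF fin(1) finite_H] by simp
qed

lemma matching_split:
  assumes M: "matching (del_vertices (E1 \<union> E2) S) M"
  shows "matching (del_vertices E1 (deleted1 S (covered_in_first S M))) (M \<inter> E1)"
    and "matching (del_vertices E2 (deleted2 S (covered_in_first S M))) (M \<inter> E2)"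
    and "card M = card (M \<inter> E1) + card (M \<inter> E2)"
proof -
  have sub: "M \<subseteq> E1 \<union> E2" and avoid: "\<And>e. e \<in> M \<Longrightarrow> e \<inter> S = {}"
    and disj: "\<And>e e'. e \<in> M \<Longrightarrow> e' \<in> M \<Longrightarrow> e \<noteq> e' \<Longrightarrow> e \<inter> e' = {}"
    using M unfolding matching_def del_vertices_def by auto
  have "e \<inter> deleted1 S (covered_in_first S M) = {}" if "e \<in> M \<inter> E1" for e
    using that avoid[of e] unfolding deleted1_def covered_in_first_def by blast
  then show "matching (del_vertices E1 (deleted1 S (covered_in_first S M))) (M \<inter> E1)"
    using disj unfolding matching_def del_vertices_def by blast
  \<comment> \<open>an edge of the second piece at a hub of covered_in_first would meet an edge of the first piece\<close>
  have "e \<inter> deleted2 S (covered_in_first S M) = {}" if e: "e \<in> M \<inter> E2" for e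
  proof -
    have "e \<inter> e' = {}" if "e' \<in> M \<inter> E1" for e'
      using disj[of e e'] e that E1_Int_E2 by blast
    then show ?thesis
      using e avoid[of e] unfolding deleted2_def covered_in_first_def by blast
  qed
  then show "matching (del_vertices E2 (deleted2 S (covered_in_first S M))) (M \<inter> E2)"
    using disj unfolding matching_def del_vertices_def by blast
  have "finite M"
    using finite_subset[OF sub] finite_E1 finite_E2 by blast
  moreover have "M = (M \<inter> E1) \<union> (M \<inter> E2)"
    using sub by blast
  ultimately show "card M = card (M \<inter> E1) + card (M \<inter> E2)"
    using card_Un_disjoint[of "M \<inter> E1" "M \<inter> E2"] E1_Int_E2 by auto
qed

lemma glued_bound:
  assumes S: "S \<subseteq> T1 \<union> T2" and M: "matching (del_vertices (E1 \<union> E2) S) M"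
  shows "card M + card S + card H \<le> t1 + t2"
proof -
  have A: "covered_in_first S M \<subseteq> H - S"
    unfolding covered_in_first_def by blast
  show ?thesis
    using matching_profile_bound[OF profile1 deleted1_subset matching_split(1)[OF M]]
      matching_profile_bound[OF profile2 deleted2_subset[OF A] matching_split(2)[OF M]]
      matching_split(3)[OF M] card_deleted[OF S A] by linarith
qed

lemma tight_covered_in_first:
  assumes A: "A \<subseteq> H - S" and M1: "M1 \<in> tight_matchings E1 (deleted1 S A) t1"
  shows "covered_in_first S M1 = A"
proof -
  have sub: "M1 \<subseteq> E1" and avoid: "\<And>e. e \<in> M1 \<Longrightarrow> e \<inter> deleted1 S A = {}"
    using M1 unfolding tight_matchings_def matching_def del_vertices_def by auto
  have "(H - S) \<inter> \<Union>M1 \<subseteq> A"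
    using avoid unfolding deleted1_def by blast
  moreover have "h \<in> \<Union>M1" if h: "h \<in> A" for h
  proof (rule ccontr)
    \<comment> \<open>otherwise h could be deleted as well, contradicting the bound for the first piece\<close>
    assume "h \<notin> \<Union>M1"
    then have "matching (del_vertices E1 (insert h (deleted1 S A))) M1"
      using M1 unfolding tight_matchings_def matching_def del_vertices_def by auto
    with h A deleted1_subset H_T1 have "card M1 + card (insert h (deleted1 S A)) \<le> t1"
      by (intro matching_profile_bound[OF profile1]) blast+
    moreover have "h \<notin> deleted1 S A" "finite (deleted1 S A)"
      using h A finite_subset[OF deleted1_subset finite_T1] unfolding deleted1_def by auto
    ultimately show False
      using M1 unfolding tight_matchings_def by simp
  qed
  moreover have "M1 \<inter> E1 = M1"
    using sub by blast
  ultimately show ?thesis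
    using A unfolding covered_in_first_def by blast
qed

lemma tight_union_matching:
  assumes S: "S \<subseteq> T1 \<union> T2" and A: "A \<subseteq> H - S"
    and M1: "M1 \<in> tight_matchings E1 (deleted1 S A) t1"
    and M2: "M2 \<in> tight_matchings E2 (deleted2 S A) t2"
  shows "matching (del_vertices (E1 \<union> E2) S) (M1 \<union> M2)"
proof -
  have M1': "matching (del_vertices E1 (deleted1 S A)) M1" and M2': "matching (del_vertices E2 (deleted2 S A)) M2"
    using M1 M2 unfolding tight_matchings_def by auto
  have "S \<inter> V1 \<subseteq> deleted1 S A"
    using S T2_V2 V1_Int_V2 H_T1 unfolding deleted1_def by blast
  then have "matching (del_vertices E1 S) M1"
    by (rule matching_del_vertices_subset[OF M1' E1_V1])
  moreover have "S \<inter> V2 \<subseteq> deleted2 S A"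
    using S T1_V1 V1_Int_V2 H_T2 unfolding deleted2_def by blast
  then have "matching (del_vertices E2 S) M2"
    by (rule matching_del_vertices_subset[OF M2' E2_V2])
  moreover have "e1 \<inter> e2 = {}" if "e1 \<in> M1" "e2 \<in> M2" for e1 e2
  proof -
    have "e1 \<in> del_vertices E1 (deleted1 S A)" "e2 \<in> del_vertices E2 (deleted2 S A)"
      using that M1' M2' unfolding matching_def by blast+
    then have "e1 \<inter> e2 \<subseteq> H" "e1 \<inter> deleted1 S A = {}" "e2 \<inter> deleted2 S A = {}"
      using E1_V1 E2_V2 V1_Int_V2 unfolding del_vertices_def by blast+
    moreover have "H \<subseteq> deleted1 S A \<union> deleted2 S A"
      using A H_T1 H_T2 unfolding deleted1_def deleted2_def by blast
    ultimately show ?thesis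
      by blast
  qed
  ultimately show ?thesis
    unfolding del_vertices_Un by (rule matching_Un)
qed

lemma glued_tight_matchings_bij:
  assumes S: "S \<subseteq> T1 \<union> T2"
  shows "bij_betw (\<lambda>(A, M1, M2). M1 \<union> M2)
    (SIGMA A:Pow (H - S). tight_matchings E1 (deleted1 S A) t1 \<times> tight_matchings E2 (deleted2 S A) t2)
    {M. matching (del_vertices (E1 \<union> E2) S) M \<and> card M + card S + card H = t1 + t2}"
proof -
  have union: "(covered_in_first S (M1 \<union> M2), (M1 \<union> M2) \<inter> E1, (M1 \<union> M2) \<inter> E2) = (A, M1, M2) \<and>
      matching (del_vertices (E1 \<union> E2) S) (M1 \<union> M2) \<and> card (M1 \<union> M2) + card S + card H = t1 + t2"
    if A: "A \<subseteq> H - S" and M1: "M1 \<in> tight_matchings E1 (deleted1 S A) t1"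
      and M2: "M2 \<in> tight_matchings E2 (deleted2 S A) t2" for A M1 M2
  proof -
    have sub: "M1 \<subseteq> E1" "M2 \<subseteq> E2"
      using M1 M2 unfolding tight_matchings_def matching_def del_vertices_def by auto
    then have parts: "(M1 \<union> M2) \<inter> E1 = M1" "(M1 \<union> M2) \<inter> E2 = M2"
      using E1_Int_E2 by blast+
    moreover have "covered_in_first S (M1 \<union> M2) = A"
      using tight_covered_in_first[OF A M1] parts(1) sub(1) unfolding covered_in_first_def by (simp add: inf.absorb1)
    moreover have "card (M1 \<union> M2) = card M1 + card M2"
      using sub E1_Int_E2 finite_E1 finite_E2 by (meson card_Un_disjoint disjoint_iff finite_subset subsetD)
    ultimately show ?thesis
      using tight_union_matching[OF S A M1 M2] card_deleted[OF S A] M1 M2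
      unfolding tight_matchings_def by simp
  qed
  have split: "covered_in_first S M \<in> Pow (H - S) \<and>
      M \<inter> E1 \<in> tight_matchings E1 (deleted1 S (covered_in_first S M)) t1 \<and>
      M \<inter> E2 \<in> tight_matchings E2 (deleted2 S (covered_in_first S M)) t2 \<and> (M \<inter> E1) \<union> (M \<inter> E2) = M"
    if M: "matching (del_vertices (E1 \<union> E2) S) M" and t: "card M + card S + card H = t1 + t2" for M
  proof -
    have A: "covered_in_first S M \<subseteq> H - S"
      unfolding covered_in_first_def by blast
    have "card (M \<inter> E1) + card (deleted1 S (covered_in_first S M)) \<le> t1"
      "card (M \<inter> E2) + card (deleted2 S (covered_in_first S M)) \<le> t2"
      using matching_profile_bound[OF profile1 deleted1_subset matching_split(1)[OF M]]
        matching_profile_bound[OF profile2 deleted2_subset[OF A] matching_split(2)[OF M]] .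
    moreover have "M \<subseteq> E1 \<union> E2"
      using M unfolding matching_def del_vertices_def by blast
    ultimately show ?thesis
      using A matching_split[OF M] card_deleted[OF S A] t unfolding tight_matchings_def by auto
  qed
  show ?thesis
    by (rule bij_betw_byWitness[where f' = "\<lambda>M. (covered_in_first S M, M \<inter> E1, M \<inter> E2)"])
      (use union split in force)+
qed

theorem glue_profiles:
  "matching_profile (E1 \<union> E2) (T1 \<union> T2) (t1 + t2 - card H)
     (\<lambda>S. \<Sum>A\<in>Pow (H - S). N1 (deleted1 S A) * N2 (deleted2 S A))"
proof -
  have "(\<forall>M. matching (del_vertices (E1 \<union> E2) S) M \<longrightarrow> card M + card S \<le> t1 + t2 - card H) \<and>
    card (tight_matchings (E1 \<union> E2) S (t1 + t2 - card H)) =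
      (\<Sum>A\<in>Pow (H - S). N1 (deleted1 S A) * N2 (deleted2 S A)) \<and>
    0 < (\<Sum>A\<in>Pow (H - S). N1 (deleted1 S A) * N2 (deleted2 S A))" if S: "S \<subseteq> T1 \<union> T2" for S
  proof (intro conjI allI impI)
    have "card S + card H \<le> t1 + t2"
      using glued_bound[OF S, of "{}"] by (simp add: matching_def)
    then have eq: "tight_matchings (E1 \<union> E2) S (t1 + t2 - card H) =
        {M. matching (del_vertices (E1 \<union> E2) S) M \<and> card M + card S + card H = t1 + t2}"
      unfolding tight_matchings_def by auto
    show "card M + card S \<le> t1 + t2 - card H" if "matching (del_vertices (E1 \<union> E2) S) M" for M
      using glued_bound[OF S that] by simp
    have "card (tight_matchings (E1 \<union> E2) S (t1 + t2 - card H)) =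
        (\<Sum>A\<in>Pow (H - S). card (tight_matchings E1 (deleted1 S A) t1) * card (tight_matchings E2 (deleted2 S A) t2))"
      unfolding eq bij_betw_same_card[OF glued_tight_matchings_bij[OF S], symmetric]
      using finite_H by (simp add: card_SigmaI card_cartesian_product finite_tight_matchings finite_E1 finite_E2)
    then show "card (tight_matchings (E1 \<union> E2) S (t1 + t2 - card H)) =
        (\<Sum>A\<in>Pow (H - S). N1 (deleted1 S A) * N2 (deleted2 S A))"
      using matching_profile_card[OF profile1 deleted1_subset] matching_profile_card[OF profile2 deleted2_subset]
      by (simp add: Pow_def)
    show "0 < (\<Sum>A\<in>Pow (H - S). N1 (deleted1 S A) * N2 (deleted2 S A))"
      using finite_H matching_profile_pos[OF profile1 deleted1_subset] matching_profile_pos[OF profile2 deleted2_subset]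
      by (intro sum_pos2[where i = "{}"]) auto
  qed
  then show ?thesis
    using profile1 profile2 finite_T1 finite_T2 unfolding matching_profile_def by auto
qed

end


(* (p, q, r) plays the role of (phi, varphi, theta): the counts after deleting two, one or none
   of the two hubs. *)
fun hub_count :: "nat \<times> nat \<times> nat \<Rightarrow> nat \<Rightarrow> nat" where
  "hub_count (p, q, r) n = (if n = 0 then r else if n = 1 then q else p)"

definition two_hub_profile :: "'a set set \<Rightarrow> 'a \<Rightarrow> 'a \<Rightarrow> nat \<Rightarrow> nat \<times> nat \<times> nat \<Rightarrow> bool" where
  "two_hub_profile E a b t k \<longleftrightarrow> matching_profile E {a, b} t (\<lambda>S. hub_count k (card S))"

lemma two_hub_profile_commute: "two_hub_profile E a b t k \<longleftrightarrow> two_hub_profile E b a t k"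
  unfolding two_hub_profile_def by (simp add: insert_commute)

fun series_counts :: "nat \<times> nat \<times> nat \<Rightarrow> nat \<times> nat \<times> nat" where
  "series_counts (p, q, r) = (2 * p * q, p * r + q ^ 2, 2 * q * r)"

fun parallel_counts :: "nat \<times> nat \<times> nat \<Rightarrow> nat \<times> nat \<times> nat" where
  "parallel_counts (p, q, r) = (p ^ 2, 2 * p * q, 2 * p * r + 2 * q ^ 2)"

lemma edges_disjoint:
  assumes "\<forall>e\<in>E1. card e = 2" "\<Union>E1 \<subseteq> V1" "\<Union>E2 \<subseteq> V2" "V1 \<inter> V2 \<subseteq> {h}"
  shows "E1 \<inter> E2 = {}"
proof (rule ccontr)
  assume "E1 \<inter> E2 \<noteq> {}"
  then obtain e where e: "e \<in> E1" "e \<in> E2"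
    by blast
  then have "card e \<le> card {h}"
    using assms(2-4) by (intro card_mono) blast+
  then show False
    using assms(1) e by simp
qed

lemma sum_Pow_singleton: "(\<Sum>A\<in>Pow {a}. f A) = f {} + f {a}"
  by (simp add: Pow_insert add.commute)

lemma sum_Pow_doubleton: "a \<noteq> b \<Longrightarrow> (\<Sum>A\<in>Pow {a, b}. f A) = f {} + f {a} + f {b} + f {a, b}"
  by (simp add: Pow_insert sum.union_disjoint image_iff insert_commute add.assoc)

lemma series_profile:
  assumes "distinct [a, b, c]"
    and P1: "two_hub_profile E1 a b t1 k" and P2: "two_hub_profile E2 b c t2 k"
    and V: "\<Union>E1 \<subseteq> V1" "{a, b} \<subseteq> V1" "\<Union>E2 \<subseteq> V2" "{b, c} \<subseteq> V2" "V1 \<inter> V2 = {b}"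
  shows "two_hub_profile (E1 \<union> E2) a c (t1 + t2 - 1) (series_counts k)"
proof -
  obtain p q r where k: "k = (p, q, r)"
    by (cases k)
  have "E1 \<inter> E2 = {}"
    using P1 V unfolding two_hub_profile_def matching_profile_def by (intro edges_disjoint[where h = b]) auto
  then interpret profile_gluing E1 E2 V1 V2 "{a, b}" "{b, c}" "{b}" t1 t2
    "\<lambda>S. hub_count k (card S)" "\<lambda>S. hub_count k (card S)"
    using P1 P2 V unfolding two_hub_profile_def by unfold_locales auto
  have "matching_profile (E1 \<union> E2) ({a, b} \<union> {b, c}) (t1 + t2 - 1)
      (\<lambda>S. \<Sum>A\<in>Pow ({b} - S). hub_count k (card (deleted1 S A)) * hub_count k (card (deleted2 S A)))"
    using glue_profiles by simp
  then show ?thesis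
    unfolding two_hub_profile_def
  proof (rule matching_profile_mono)
    fix S assume "S \<subseteq> {a, c}"
    then consider "S = {}" | "S = {a}" | "S = {c}" | "S = {a, c}"
      by blast
    then show "hub_count (series_counts k) (card S) =
        (\<Sum>A\<in>Pow ({b} - S). hub_count k (card (deleted1 S A)) * hub_count k (card (deleted2 S A)))"
      by cases (use assms(1) in \<open>auto simp: k deleted1_def deleted2_def sum_Pow_singleton power2_eq_square\<close>)
  qed blast
qed

lemma parallel_profile:
  assumes "a \<noteq> c"
    and P1: "two_hub_profile E1 a c t1 k" and P2: "two_hub_profile E2 a c t2 k"
    and V: "\<Union>E1 \<subseteq> V1" "{a, c} \<subseteq> V1" "\<Union>E2 \<subseteq> V2" "{a, c} \<subseteq> V2" "V1 \<inter> V2 = {a, c}"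
    and E: "E1 \<inter> E2 = {}"
  shows "two_hub_profile (E1 \<union> E2) a c (t1 + t2 - 2) (parallel_counts k)"
proof -
  obtain p q r where k: "k = (p, q, r)"
    by (cases k)
  interpret profile_gluing E1 E2 V1 V2 "{a, c}" "{a, c}" "{a, c}" t1 t2
    "\<lambda>S. hub_count k (card S)" "\<lambda>S. hub_count k (card S)"
    using P1 P2 V E unfolding two_hub_profile_def by unfold_locales auto
  have "matching_profile (E1 \<union> E2) ({a, c} \<union> {a, c}) (t1 + t2 - 2)
      (\<lambda>S. \<Sum>A\<in>Pow ({a, c} - S). hub_count k (card (deleted1 S A)) * hub_count k (card (deleted2 S A)))"
    using glue_profiles assms(1) by (simp add: eval_nat_numeral)
  then show ?thesis
    unfolding two_hub_profile_def
  proof (rule matching_profile_mono)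
    fix S assume "S \<subseteq> {a, c}"
    then consider "S = {}" | "S = {a}" | "S = {c}" | "S = {a, c}"
      by blast
    then show "hub_count (parallel_counts k) (card S) =
        (\<Sum>A\<in>Pow ({a, c} - S). hub_count k (card (deleted1 S A)) * hub_count k (card (deleted2 S A)))"
      by cases (use assms(1) in \<open>auto simp: k deleted1_def deleted2_def sum_Pow_singleton sum_Pow_doubleton
        insert_Diff_if power2_eq_square algebra_simps\<close>)
  qed blast
qed

lemma cycle_profile:
  assumes "distinct [a, b, c, d]"
    and P: "two_hub_profile E1 a b t1 k" "two_hub_profile E2 b c t2 k"
      "two_hub_profile E3 c d t3 k" "two_hub_profile E4 d a t4 k"
    and V: "\<Union>E1 \<subseteq> V1" "{a, b} \<subseteq> V1" "\<Union>E2 \<subseteq> V2" "{b, c} \<subseteq> V2"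
      "\<Union>E3 \<subseteq> V3" "{c, d} \<subseteq> V3" "\<Union>E4 \<subseteq> V4" "{d, a} \<subseteq> V4"
    and I: "V1 \<inter> V2 = {b}" "V2 \<inter> V3 = {c}" "V3 \<inter> V4 = {d}" "V4 \<inter> V1 = {a}"
      "V1 \<inter> V3 = {}" "V2 \<inter> V4 = {}"
  shows "\<exists>t. two_hub_profile (E1 \<union> E2 \<union> E3 \<union> E4) a c t (parallel_counts (series_counts k))"
proof -
  have two: "\<forall>e\<in>E1. card e = 2" "\<forall>e\<in>E2. card e = 2"
    using P unfolding two_hub_profile_def matching_profile_def by auto
  have "E1 \<inter> E3 = {}" "E1 \<inter> E4 = {}" "E2 \<inter> E3 = {}" "E2 \<inter> E4 = {}"
    using edges_disjoint[OF two(1) V(1) V(5), of a] edges_disjoint[OF two(1) V(1) V(7), of a]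
      edges_disjoint[OF two(2) V(3) V(5), of c] edges_disjoint[OF two(2) V(3) V(7), of c] I
    by (auto simp: Int_commute)
  then have E: "(E1 \<union> E2) \<inter> (E3 \<union> E4) = {}"
    by blast
  have "two_hub_profile (E3 \<union> E4) c a (t3 + t4 - 1) (series_counts k)"
    using assms(1) P(3,4) V(5-8) I(3) by (intro series_profile) auto
  then have P34: "two_hub_profile (E3 \<union> E4) a c (t3 + t4 - 1) (series_counts k)"
    by (rule two_hub_profile_commute[THEN iffD1])
  have P12: "two_hub_profile (E1 \<union> E2) a c (t1 + t2 - 1) (series_counts k)"
    using assms(1) P(1,2) V(1-4) I(1) by (intro series_profile) auto
  have "(V1 \<union> V2) \<inter> (V3 \<union> V4) = (V1 \<inter> V3) \<union> (V4 \<inter> V1) \<union> (V2 \<inter> V3) \<union> (V2 \<inter> V4)"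
    by blast
  then have V1234: "(V1 \<union> V2) \<inter> (V3 \<union> V4) = {a, c}"
    using I by auto
  have "two_hub_profile ((E1 \<union> E2) \<union> (E3 \<union> E4)) a c (t1 + t2 - 1 + (t3 + t4 - 1) - 2)
      (parallel_counts (series_counts k))"
    by (rule parallel_profile[OF _ P12 P34 _ _ _ _ V1234 E]) (use assms(1) V in auto)
  then show ?thesis
    by (auto simp: Un_assoc)
qed

lemma two_edge_star_matchings:
  assumes "e1 \<noteq> e2" "v \<in> e1" "v \<in> e2"
  shows "matching {e1, e2} M \<Longrightarrow> card M \<le> 1"
    and "card {M. matching {e1, e2} M \<and> card M = 1} = 2"
  using assms matching_star_card[of "{e1, e2}" v] unfolding matchings_card_one by auto

lemma four_cycle_perfect_matchings:
  assumes "distinct [a, b, c, d]"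
  shows "{M. matching {{a, c}, {c, b}, {b, d}, {d, a}} M \<and> card M = 2} =
    {{{a, c}, {b, d}}, {{c, b}, {d, a}}}"
proof (intro equalityI subsetI)
  fix M assume "M \<in> {M. matching {{a, c}, {c, b}, {b, d}, {d, a}} M \<and> card M = 2}"
  then obtain x y where M: "M = {x, y}" "x \<noteq> y" and "matching {{a, c}, {c, b}, {b, d}, {d, a}} {x, y}"
    by (auto simp: card_2_iff)
  then have "x = {a, c} \<or> x = {c, b} \<or> x = {b, d} \<or> x = {d, a}"
    "y = {a, c} \<or> y = {c, b} \<or> y = {b, d} \<or> y = {d, a}" "x \<inter> y = {}"
    unfolding matching_def by auto
  then show "M \<in> {{{a, c}, {b, d}}, {{c, b}, {d, a}}}"
    using M assms by (elim disjE) (simp_all add: insert_commute)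
next
  fix M assume "M \<in> {{{a, c}, {b, d}}, {{c, b}, {d, a}}}"
  then show "M \<in> {M. matching {{a, c}, {c, b}, {b, d}, {d, a}} M \<and> card M = 2}"
    using assms by (auto simp: matching_def doubleton_eq_iff)
qed

lemma four_cycle_matchings:
  assumes "distinct [a, b, c, d]"
  shows "matching {{a, c}, {c, b}, {b, d}, {d, a}} M \<Longrightarrow> card M \<le> 2"
    and "card {M. matching {{a, c}, {c, b}, {b, d}, {d, a}} M \<and> card M = 2} = 2"
proof -
  assume "matching {{a, c}, {c, b}, {b, d}, {d, a}} M"
  then have "2 * card M \<le> card {a, b, c, d}"
    using assms by (intro matching_card_bound) auto
  then show "card M \<le> 2"
    using assms by simp
next
  have "{{a, c}, {b, d}} \<noteq> {{c, b}, {d, a}}"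
    using assms by (auto simp: doubleton_eq_iff)
  then show "card {M. matching {{a, c}, {c, b}, {b, d}, {d, a}} M \<and> card M = 2} = 2"
    unfolding four_cycle_perfect_matchings[OF assms] by simp
qed

lemma four_cycle_profile:
  assumes "distinct [a, b, c, d]"
  shows "two_hub_profile {{a, c}, {c, b}, {b, d}, {d, a}} a b 2 (1, 2, 2)"
proof -
  define E where "E = {{a, c}, {c, b}, {b, d}, {d, a}}"
  have two: "\<forall>e\<in>E. card e = 2"
    using assms unfolding E_def by auto
  have "(\<forall>M. matching (del_vertices E S) M \<longrightarrow> card M + card S \<le> 2) \<and>
      card (tight_matchings E S 2) = hub_count (1, 2, 2) (card S)" if "S \<subseteq> {a, b}" for S
  proof -
    consider "S = {}" | "S = {a}" | "S = {b}" | "S = {a, b}"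
      using \<open>S \<subseteq> {a, b}\<close> by blast
    then show ?thesis
    proof cases
      case 1
      then show ?thesis
        using four_cycle_matchings[OF assms, folded E_def]
        unfolding tight_matchings_def del_vertices_def by simp
    next
      case 2
      have "del_vertices E S = {{c, b}, {b, d}}"
        unfolding 2 E_def del_vertices_def using assms by auto
      then show ?thesis
        using 2 assms two_edge_star_matchings[of "{c, b}" "{b, d}" b]
        unfolding tight_matchings_def by (simp add: doubleton_eq_iff)
    next
      case 3
      have "del_vertices E S = {{a, c}, {d, a}}"
        unfolding 3 E_def del_vertices_def using assms by auto
      then show ?thesis
        using 3 assms two_edge_star_matchings[of "{a, c}" "{d, a}" a]
        unfolding tight_matchings_def by (simp add: doubleton_eq_iff)
    next
      case 4
      have "del_vertices E S = {}"
        using 4 assms unfolding E_def del_vertices_def by auto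
      moreover have empty: "matching {} M \<longleftrightarrow> M = {}" for M :: "'a set set"
        unfolding matching_def by auto
      ultimately have "tight_matchings E S 2 = {{}}"
        using 4 assms unfolding tight_matchings_def by auto
      then show ?thesis
        using 4 assms \<open>del_vertices E S = {}\<close> empty by simp
    qed
  qed
  then show ?thesis
    using two unfolding two_hub_profile_def matching_profile_def E_def by auto
qed

primrec subterms :: "vtx \<Rightarrow> vtx set" where
  "subterms (Hub n) = {Hub n}"
| "subterms (New u v b) = insert (New u v b) (subterms u \<union> subterms v)"

lemma subterms_refl: "w \<in> subterms w"
  by (cases w) auto

lemma size_subterms: "z \<in> subterms w \<Longrightarrow> size z \<le> size w"
  by (induction w) auto

lemma not_in_subterms: "size w < size z \<Longrightarrow> z \<notin> subterms w"
  using size_subterms by fastforce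

lemma subterms_trans: "z \<in> subterms w \<Longrightarrow> subterms z \<subseteq> subterms w"
  by (induction w) auto

lemma New_neq [simp]: "New x y b \<noteq> x" "New x y b \<noteq> y" "x \<noteq> New x y b" "y \<noteq> New x y b"
  by (auto dest: arg_cong[where f = size])

(* The vertices created, at some later stage, inside the subdivision of the arc (x, y): they are built
   from a vertex New x y b, and every part of them lies below x or y or above such a vertex. *)
definition descendants :: "vtx \<Rightarrow> vtx \<Rightarrow> vtx set" where
  "descendants x y = {w. (\<exists>b. New x y b \<in> subterms w) \<and>
     (\<forall>z\<in>subterms w. z \<in> subterms x \<or> z \<in> subterms y \<or> (\<exists>b. New x y b \<in> subterms z))}"

definition region :: "vtx \<Rightarrow> vtx \<Rightarrow> vtx set" where
  "region x y = {x, y} \<union> descendants x y"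

lemma New_in_descendants: "New x y b \<in> descendants x y"
  unfolding descendants_def using subterms_refl by auto

lemma descendants_subset:
  assumes New: "\<And>c. New x y b \<in> subterms (New x' y' c)"
    and ends: "subterms x' \<union> subterms y' \<subseteq> subterms x \<union> subterms y \<union> {z. \<exists>b. New x y b \<in> subterms z}"
  shows "descendants x' y' \<subseteq> descendants x y"
proof
  fix w assume w: "w \<in> descendants x' y'"
  have above: "New x y b \<in> subterms z" if "New x' y' c \<in> subterms z" for z c
    using subterms_trans[OF that] New by blast
  then have "\<exists>b. New x y b \<in> subterms w"
    using w unfolding descendants_def by blast
  moreover have "z \<in> subterms x \<or> z \<in> subterms y \<or> (\<exists>b. New x y b \<in> subterms z)"
    if "z \<in> subterms w" for z
    using that w ends above unfolding descendants_def by blast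
  ultimately show "w \<in> descendants x y"
    unfolding descendants_def by blast
qed

lemma region_left: "region x (New x y b) \<subseteq> region x y"
  using descendants_subset[of x y b x "New x y b"] New_in_descendants subterms_refl
  unfolding region_def by auto

lemma region_right: "region (New x y b) y \<subseteq> region x y"
  using descendants_subset[of x y b "New x y b" y] New_in_descendants subterms_refl
  unfolding region_def by auto

lemma descendants_disjoint:
  assumes "\<And>b. New x y b \<notin> subterms x'" "\<And>b. New x y b \<notin> subterms y'"
    "\<And>b b'. New x' y' b' \<notin> subterms (New x y b)"
  shows "descendants x y \<inter> descendants x' y' = {}"
  using assms unfolding descendants_def by blast

lemma not_in_descendants: "(\<And>b. New x y b \<notin> subterms w) \<Longrightarrow> w \<notin> descendants x y"
  unfolding descendants_def by blast

lemma region_Int: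
  assumes "descendants x y \<inter> descendants x' y' = {}"
    "x \<notin> descendants x' y'" "y \<notin> descendants x' y'" "x' \<notin> descendants x y" "y' \<notin> descendants x y"
  shows "region x y \<inter> region x' y' = {x, y} \<inter> {x', y'}"
  using assms unfolding region_def by blast

fun subdivided_arcs :: "nat \<Rightarrow> vtx \<Rightarrow> vtx \<Rightarrow> (vtx \<times> vtx) set" where
  "subdivided_arcs 0 x y = {(x, y)}"
| "subdivided_arcs (Suc k) x y =
     subdivided_arcs k x (New x y False) \<union> subdivided_arcs k (New x y False) y \<union>
     subdivided_arcs k x (New x y True) \<union> subdivided_arcs k (New x y True) y"

definition subdivide :: "(vtx \<times> vtx) set \<Rightarrow> (vtx \<times> vtx) set" where
  "subdivide R = (\<Union>(u, v)\<in>R. \<Union>b\<in>{False, True}. {(u, New u v b), (New u v b, v)})"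

lemma subdivide_Un: "subdivide (A \<union> B) = subdivide A \<union> subdivide B"
  unfolding subdivide_def by blast

lemma subdivide_subdivided_arcs: "subdivide (subdivided_arcs k x y) = subdivided_arcs (Suc k) x y"
proof (induction k arbitrary: x y)
  case 0
  then show ?case
    unfolding subdivide_def by auto
next
  case (Suc k)
  show ?case
    by (simp only: subdivided_arcs.simps(2) subdivide_Un Suc.IH)
qed

lemma F_arcs_Suc:
  "F_arcs (Suc g) = subdivided_arcs g (Hub 1) (Hub 3) \<union> subdivided_arcs g (Hub 3) (Hub 2) \<union>
     subdivided_arcs g (Hub 2) (Hub 4) \<union> subdivided_arcs g (Hub 4) (Hub 1)"
proof (induction g)
  case 0
  then show ?case
    by auto
next
  case (Suc g)
  have "F_arcs (Suc (Suc g)) = subdivide (F_arcs (Suc g))"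
    by (simp add: subdivide_def)
  then show ?case
    by (simp only: Suc subdivide_Un subdivide_subdivided_arcs)
qed

lemma subdivided_arcs_region: "(u, v) \<in> subdivided_arcs k x y \<Longrightarrow> u \<in> region x y \<and> v \<in> region x y"
proof (induction k arbitrary: x y)
  case 0
  then show ?case
    unfolding region_def by auto
next
  case (Suc k)
  then show ?case
    using Suc.IH[of x "New x y False"] Suc.IH[of "New x y False" y]
      Suc.IH[of x "New x y True"] Suc.IH[of "New x y True" y]
      region_left[of x y False] region_right[of x y False]
      region_left[of x y True] region_right[of x y True] by auto
qed

definition edges_of_arcs :: "(vtx \<times> vtx) set \<Rightarrow> vtx set set" where
  "edges_of_arcs R = {{u, v} | u v. (u, v) \<in> R}"

lemma edges_of_arcs_Un: "edges_of_arcs (A \<union> B) = edges_of_arcs A \<union> edges_of_arcs B"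
  unfolding edges_of_arcs_def by blast

lemma edges_of_arcs_insert: "edges_of_arcs (insert (u, v) R) = insert {u, v} (edges_of_arcs R)"
  unfolding edges_of_arcs_def by blast

lemma edges_of_arcs_empty: "edges_of_arcs {} = {}"
  unfolding edges_of_arcs_def by blast

definition subdivided_edges :: "nat \<Rightarrow> vtx \<Rightarrow> vtx \<Rightarrow> vtx set set" where
  "subdivided_edges k x y = edges_of_arcs (subdivided_arcs k x y)"

lemma subdivided_edges_Suc:
  "subdivided_edges (Suc k) x y =
     subdivided_edges k x (New x y False) \<union> subdivided_edges k (New x y False) y \<union>
     subdivided_edges k x (New x y True) \<union> subdivided_edges k (New x y True) y"
  unfolding subdivided_edges_def by (simp add: edges_of_arcs_Un)

lemma subdivided_edges_region: "\<Union>(subdivided_edges k x y) \<subseteq> region x y"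
  unfolding subdivided_edges_def edges_of_arcs_def using subdivided_arcs_region by blast

lemma ends_region: "{x, y} \<subseteq> region x y"
  unfolding region_def by blast

lemma subdivision_regions_Int:
  assumes "x \<noteq> y"
  defines "n0 \<equiv> New x y False" and "n1 \<equiv> New x y True"
  shows "region x n0 \<inter> region n0 y = {n0}" "region n0 y \<inter> region n1 y = {y}"
    "region n1 y \<inter> region x n1 = {n1}" "region x n1 \<inter> region x n0 = {x}"
    "region x n0 \<inter> region n1 y = {}" "region n0 y \<inter> region x n1 = {}"
proof -
  have "region x n0 \<inter> region n0 y = {x, n0} \<inter> {n0, y}"
    "region n0 y \<inter> region n1 y = {n0, y} \<inter> {n1, y}"
    "region n1 y \<inter> region x n1 = {n1, y} \<inter> {x, n1}"
    "region x n1 \<inter> region x n0 = {x, n1} \<inter> {x, n0}"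
    "region x n0 \<inter> region n1 y = {x, n0} \<inter> {n1, y}"
    "region n0 y \<inter> region x n1 = {n0, y} \<inter> {x, n1}"
    unfolding n0_def n1_def
    by (intro region_Int descendants_disjoint not_in_descendants; auto simp: not_in_subterms)+
  then show "region x n0 \<inter> region n0 y = {n0}" "region n0 y \<inter> region n1 y = {y}"
    "region n1 y \<inter> region x n1 = {n1}" "region x n1 \<inter> region x n0 = {x}"
    "region x n0 \<inter> region n1 y = {}" "region n0 y \<inter> region x n1 = {}"
    using assms(1) unfolding n0_def n1_def by auto
qed

fun hub_counts :: "nat \<Rightarrow> nat \<times> nat \<times> nat" where
  "hub_counts 0 = (1, 2, 2)"
| "hub_counts (Suc k) = parallel_counts (series_counts (hub_counts k))"

lemma subdivided_edges_profile:
  "x \<noteq> y \<Longrightarrow> \<exists>t. two_hub_profile (subdivided_edges (Suc k) x y) x y t (hub_counts k)"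
proof (induction k arbitrary: x y)
  case 0
  have "subdivided_edges (Suc 0) x y =
      {{x, New x y False}, {New x y False, y}, {y, New x y True}, {New x y True, x}}"
    by (simp add: subdivided_edges_def edges_of_arcs_Un edges_of_arcs_insert edges_of_arcs_empty) blast
  moreover have "distinct [x, y, New x y False, New x y True]"
    using 0 by simp
  ultimately have "two_hub_profile (subdivided_edges (Suc 0) x y) x y 2 (hub_counts 0)"
    using four_cycle_profile[of x y "New x y False" "New x y True"] by simp
  then show ?case
    by blast
next
  case (Suc k)
  define n0 n1 where "n0 = New x y False" and "n1 = New x y True"
  have d: "distinct [x, n0, y, n1]"
    using Suc.prems unfolding n0_def n1_def by simp
  have "\<exists>t. two_hub_profile (subdivided_edges (Suc k) x n0) x n0 t (hub_counts k)"
    "\<exists>t. two_hub_profile (subdivided_edges (Suc k) n0 y) n0 y t (hub_counts k)"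
    "\<exists>t. two_hub_profile (subdivided_edges (Suc k) n1 y) n1 y t (hub_counts k)"
    "\<exists>t. two_hub_profile (subdivided_edges (Suc k) x n1) x n1 t (hub_counts k)"
    using d by (auto intro!: Suc.IH)
  then obtain t1 t2 t3 t4 where P:
    "two_hub_profile (subdivided_edges (Suc k) x n0) x n0 t1 (hub_counts k)"
    "two_hub_profile (subdivided_edges (Suc k) n0 y) n0 y t2 (hub_counts k)"
    "two_hub_profile (subdivided_edges (Suc k) n1 y) n1 y t3 (hub_counts k)"
    "two_hub_profile (subdivided_edges (Suc k) x n1) x n1 t4 (hub_counts k)"
    by blast
  have I: "region x n0 \<inter> region n0 y = {n0}" "region n0 y \<inter> region n1 y = {y}"
    "region n1 y \<inter> region x n1 = {n1}" "region x n1 \<inter> region x n0 = {x}"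
    "region x n0 \<inter> region n1 y = {}" "region n0 y \<inter> region x n1 = {}"
    using subdivision_regions_Int[OF Suc.prems] unfolding n0_def n1_def .
  have "\<exists>t. two_hub_profile (subdivided_edges (Suc k) x n0 \<union> subdivided_edges (Suc k) n0 y \<union>
      subdivided_edges (Suc k) n1 y \<union> subdivided_edges (Suc k) x n1) x y t (hub_counts (Suc k))"
    using cycle_profile[OF d P(1,2) P(3)[THEN two_hub_profile_commute[THEN iffD1]]
        P(4)[THEN two_hub_profile_commute[THEN iffD1]] _ _ _ _ _ _ _ _ I]
      subdivided_edges_region ends_region by (simp add: insert_commute)
  moreover have "subdivided_edges (Suc (Suc k)) x y = subdivided_edges (Suc k) x n0 \<union>
      subdivided_edges (Suc k) n0 y \<union> subdivided_edges (Suc k) n1 y \<union> subdivided_edges (Suc k) x n1"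
    unfolding subdivided_edges_Suc[of "Suc k"] n0_def n1_def by blast
  ultimately show ?case
    by simp
qed

lemma F_edges_profile: "\<exists>t. two_hub_profile (F_edges (Suc g)) (Hub 1) (Hub 2) t (hub_counts g)"
proof (cases g)
  case 0
  have "F_edges (Suc 0) = {{Hub 1, Hub 3}, {Hub 3, Hub 2}, {Hub 2, Hub 4}, {Hub 4, Hub 1}}"
    unfolding F_edges_def by auto
  then have "two_hub_profile (F_edges (Suc 0)) (Hub 1) (Hub 2) 2 (hub_counts 0)"
    using four_cycle_profile[of "Hub 1" "Hub 2" "Hub 3" "Hub 4"] by simp
  then show ?thesis
    using 0 by blast
next
  case (Suc k)
  have d: "distinct [Hub 1, Hub 3, Hub 2, Hub 4]"
    by simp
  have F: "F_edges (Suc (Suc k)) =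
      subdivided_edges (Suc k) (Hub 1) (Hub 3) \<union> subdivided_edges (Suc k) (Hub 3) (Hub 2) \<union>
      subdivided_edges (Suc k) (Hub 2) (Hub 4) \<union> subdivided_edges (Suc k) (Hub 4) (Hub 1)"
    unfolding F_edges_def subdivided_edges_def F_arcs_Suc[of "Suc k"] edges_of_arcs_def by blast
  have "\<exists>t. two_hub_profile (subdivided_edges (Suc k) (Hub 1) (Hub 3)) (Hub 1) (Hub 3) t (hub_counts k)"
    "\<exists>t. two_hub_profile (subdivided_edges (Suc k) (Hub 3) (Hub 2)) (Hub 3) (Hub 2) t (hub_counts k)"
    "\<exists>t. two_hub_profile (subdivided_edges (Suc k) (Hub 2) (Hub 4)) (Hub 2) (Hub 4) t (hub_counts k)"
    "\<exists>t. two_hub_profile (subdivided_edges (Suc k) (Hub 4) (Hub 1)) (Hub 4) (Hub 1) t (hub_counts k)"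
    by (simp_all add: subdivided_edges_profile)
  then obtain t1 t2 t3 t4 where P:
    "two_hub_profile (subdivided_edges (Suc k) (Hub 1) (Hub 3)) (Hub 1) (Hub 3) t1 (hub_counts k)"
    "two_hub_profile (subdivided_edges (Suc k) (Hub 3) (Hub 2)) (Hub 3) (Hub 2) t2 (hub_counts k)"
    "two_hub_profile (subdivided_edges (Suc k) (Hub 2) (Hub 4)) (Hub 2) (Hub 4) t3 (hub_counts k)"
    "two_hub_profile (subdivided_edges (Suc k) (Hub 4) (Hub 1)) (Hub 4) (Hub 1) t4 (hub_counts k)"
    by blast
  have I: "region (Hub 1) (Hub 3) \<inter> region (Hub 3) (Hub 2) = {Hub 3}"
    "region (Hub 3) (Hub 2) \<inter> region (Hub 2) (Hub 4) = {Hub 2}"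
    "region (Hub 2) (Hub 4) \<inter> region (Hub 4) (Hub 1) = {Hub 4}"
    "region (Hub 4) (Hub 1) \<inter> region (Hub 1) (Hub 3) = {Hub 1}"
    "region (Hub 1) (Hub 3) \<inter> region (Hub 2) (Hub 4) = {}"
    "region (Hub 3) (Hub 2) \<inter> region (Hub 4) (Hub 1) = {}"
    by (subst region_Int; (intro descendants_disjoint not_in_descendants)?; auto)+
  show ?thesis
    unfolding Suc F
    using cycle_profile[OF d P subdivided_edges_region ends_region subdivided_edges_region ends_region
        subdivided_edges_region ends_region subdivided_edges_region ends_region I]
    by simp
qed

lemma phi_varphi_theta_Suc: "(phi (Suc g), varphi (Suc g), theta (Suc g)) = hub_counts g"
proof -
  obtain p q r where pqr: "hub_counts g = (p, q, r)"
    by (cases "hub_counts g")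
  obtain t where "two_hub_profile (F_edges (Suc g)) (Hub 1) (Hub 2) t (hub_counts g)"
    using F_edges_profile by blast
  then have "num_max_matchings (del_vertices (F_edges (Suc g)) S) = hub_count (p, q, r) (card S)"
    if "S \<subseteq> {Hub 1, Hub 2}" for S
    using num_max_matchings_profile that unfolding two_hub_profile_def pqr by blast
  from this[of "{Hub 1, Hub 2}"] this[of "{Hub 1}"] this[of "{}"] show ?thesis
    unfolding phi_def varphi_def theta_def pqr by (simp add: del_vertices_def)
qed

lemma parallel_series_counts:
  "parallel_counts (series_counts (p, q, r)) =
    (4 * p ^ 2 * q ^ 2, 4 * p ^ 2 * q * r + 4 * p * q ^ 3,
     2 * p ^ 2 * r ^ 2 + 2 * q ^ 4 + 12 * p * q ^ 2 * r)"
  by (simp add: power2_eq_square power3_eq_cube power4_eq_xxxx algebra_simps)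

theorem theorem2:
  shows "phi 1 = 1 \<and> varphi 1 = 2 \<and> theta 1 = 2 \<and>
    (\<forall>g\<ge>1.
       phi (g + 1) = 4 * phi g ^ 2 * varphi g ^ 2 \<and>
       varphi (g + 1) = 4 * phi g ^ 2 * varphi g * theta g + 4 * phi g * varphi g ^ 3 \<and>
       theta (g + 1) = 2 * phi g ^ 2 * theta g ^ 2 + 2 * varphi g ^ 4
                        + 12 * phi g * varphi g ^ 2 * theta g)"
proof (intro conjI allI impI)
  show "phi 1 = 1" "varphi 1 = 2" "theta 1 = 2"
    using phi_varphi_theta_Suc[of 0] by simp_all
  fix g :: nat assume "g \<ge> 1"
  then obtain k where g: "g = Suc k"
    using not0_implies_Suc by fastforce
  have "(phi (g + 1), varphi (g + 1), theta (g + 1)) =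
      parallel_counts (series_counts (phi g, varphi g, theta g))"
    unfolding g using phi_varphi_theta_Suc[of k] phi_varphi_theta_Suc[of "Suc k"] by simp
  then show "phi (g + 1) = 4 * phi g ^ 2 * varphi g ^ 2"
    "varphi (g + 1) = 4 * phi g ^ 2 * varphi g * theta g + 4 * phi g * varphi g ^ 3"
    "theta (g + 1) = 2 * phi g ^ 2 * theta g ^ 2 + 2 * varphi g ^ 4 + 12 * phi g * varphi g ^ 2 * theta g"
    unfolding parallel_series_counts by simp_all
qed

end
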